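(* For $k\ge2$, let $\mathrm{SCHF}[2^k]$ denote the recursive spherical codes by Hopf foliations in dimension $2^k$ (see context), with cardinalities $M(2^k,d)$. Then the asymptotic center density $$\overline{\Delta}_c(\mathrm{SCHF}[2^k])=\lim_{d\to0}\frac{M(2^k,d)}{\mathbb{S}_{2^k}}\left(\frac d2\right)^{2^k-1}$$ equals $2^{\,1-3\cdot2^{k-2}}\,3^{-2^{k-3}}$.
   Context: $\mathbb{S}_m=\frac{m\pi^{m/2}}{\Gamma(1+m/2)}$ is the surface area of the unit sphere $S^{m-1}\subset\mathbb{R}^m$. Base case $\mathrm{SCHF}[4]$: for $d\in(0,2]$, with $\Delta\eta=2\arcsin(d/2)$, $t=\lfloor\pi/(4\arcsin(d/2))\rfloor$, $\eta_i=\pi/4+i\Delta\eta$ ($0\le i\le\lfloor t/2\rfloor$), $m(d,\eta)=\lfloor\pi/\arcsin(d/(2\cos\eta))\rfloor$ if $d\le2\cos\eta$ and $1$ otherwise, $n(d,\eta)=\max(2\lfloor\min\{n_1,n_2\}/2\rfloor,1)$ with $n_1=\lfloor\pi/\arcsin[((d^2/4)\csc^2\eta-\cot^2\eta\sin^2(\pi/2m))^{1/2}]\rfloor$ ($m=m(d,\eta)$) and $n_2=\lfloor2\pi/\arcsin(d/(2\sin\eta))\rfloor$ if $d\le2\sin\eta$, $1$ otherwise, the code consists of the points $(e^{\mathbf{i}(2\pi j/m_i+\pi k/m_i)}\cos\eta_i,e^{\mathbf{i}2\pi k/n_i}\sin\eta_i)\in\mathbb{C}^2\cong\mathbb{R}^4$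 ($0\le j<m_i=m(d,\eta_i)$, $0\le k<n_i=n(d,\eta_i)$) together with their images under swapping the two complex coordinates for $i\ge1$; so $M(4,d)=m_0n_0+2\sum_{i=1}^{\lfloor t/2\rfloor}m_in_i$. For $d>2$ (including $d=+\infty$) the code in any dimension is a single point. Recursive step: for $k\ge3$ and $d\in(0,2]$, with the same $\Delta\eta,t$ and $\eta_i=\pi/4+i\Delta\eta$ for $|i|\le\lfloor t/2\rfloor$, $\mathrm{SCHF}[2^k]$ with minimum distance $d$ is the union over $i$ of $\{(\cos\eta_i\mathbf{x};\sin\eta_i\mathbf{y})\}$ with $\mathbf{x}$ in $\mathrm{SCHF}[2^{k-1}]$ of minimum distance $d/\cos\eta_i$ and $\mathbf{y}$ in $\mathrm{SCHF}[2^{k-1}]$ of minimum distance $d/\sin\eta_i$ (with $d/0:=+\infty$); so $M(2^k,d)=\sum_{|i|\le\lfloor t/2\rfloor}M(2^{k-1},d/\cos\eta_i)M(2^{k-1},d/\sin\eta_i)$. *)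

theory Defs
  imports "HOL-Analysis.Analysis"
begin

text \<open>Surface area of the unit sphere S^(m-1) in R^m.\<close>
definition sphere_area :: "nat \<Rightarrow> real" where
  "sphere_area m = real m * pi powr (real m / 2) / Gamma (1 + real m / 2)"

definition schf_deta :: "real \<Rightarrow> real" where
  "schf_deta d = 2 * arcsin (d / 2)"

definition schf_t :: "real \<Rightarrow> int" where
  "schf_t d = \<lfloor>pi / (4 * arcsin (d / 2))\<rfloor>"

definition schf_eta :: "real \<Rightarrow> int \<Rightarrow> real" where
  "schf_eta d i = pi / 4 + real_of_int i * schf_deta d"

definition schf_m :: "real \<Rightarrow> real \<Rightarrow> int" where
  "schf_m d \<eta> = (if d \<le> 2 * cos \<eta> then \<lfloor>pi / arcsin (d / (2 * cos \<eta>))\<rfloor> else 1)"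

definition schf_n1 :: "real \<Rightarrow> real \<Rightarrow> int" where
  "schf_n1 d \<eta> = \<lfloor>pi / arcsin (sqrt ((d\<^sup>2 / 4) * (1 / sin \<eta>)\<^sup>2
        - (cos \<eta> / sin \<eta>)\<^sup>2 * (sin (pi / (2 * real_of_int (schf_m d \<eta>))))\<^sup>2))\<rfloor>"

definition schf_n2 :: "real \<Rightarrow> real \<Rightarrow> int" where
  "schf_n2 d \<eta> = (if d \<le> 2 * sin \<eta> then \<lfloor>2 * pi / arcsin (d / (2 * sin \<eta>))\<rfloor> else 1)"

definition schf_n :: "real \<Rightarrow> real \<Rightarrow> int" where
  "schf_n d \<eta> = max (2 * \<lfloor>real_of_int (min (schf_n1 d \<eta>) (schf_n2 d \<eta>)) / 2\<rfloor>) 1"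

definition schf_M4 :: "real \<Rightarrow> real" where
  "schf_M4 d = (if 2 < d then 1 else
     real_of_int (schf_m d (schf_eta d 0) * schf_n d (schf_eta d 0))
     + 2 * (\<Sum>i\<in>{1..schf_t d div 2}.
              real_of_int (schf_m d (schf_eta d i) * schf_n d (schf_eta d i))))"

text \<open>Recursive step. schf_Mrec j d = M(2^(j+2), d). Division by zero (d/0 = +infinity)
  yields a single point, encoded by the auxiliary case distinction.\<close>
primrec schf_Mrec :: "nat \<Rightarrow> real \<Rightarrow> real" where
  "schf_Mrec 0 d = schf_M4 d"
| "schf_Mrec (Suc j) d = (if 2 < d then 1 else
     (\<Sum>i\<in>{- (schf_t d div 2)..schf_t d div 2}.
        (if cos (schf_eta d i) = 0 then 1 else schf_Mrec j (d / cos (schf_eta d i)))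
      * (if sin (schf_eta d i) = 0 then 1 else schf_Mrec j (d / sin (schf_eta d i)))))"

definition schf_M :: "nat \<Rightarrow> real \<Rightarrow> real" where
  "schf_M k d = schf_Mrec (k - 2) d"

end

theory Submission
  imports Defs
begin

text \<open>Write \<open>N = 2^k - 1\<close> and \<open>\<Delta>\<eta> = 2 arcsin (d/2) \<sim> d\<close>. The layers \<open>\<eta>_i = \<pi>/4 + i \<Delta>\<eta>\<close>,
  \<open>|i| \<le> T\<close>, fill \<open>[0, \<pi>/2]\<close>, so \<open>d\<close> times a sum over the layers of a function of \<open>(d, \<eta>_i)\<close>
  is a Riemann sum; it converges to the integral of the pointwise limit by dominated convergence.
  For SCHF[4], \<open>d m \<rightarrow> 2\<pi> cos \<eta>\<close> and \<open>d n \<rightarrow> 4\<pi> sin \<eta> / \<surd>3\<close>, hence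
  \<open>d^3 M(4,d) \<rightarrow> (8\<pi>^2/\<surd>3) \<integral> sin \<eta> cos \<eta> d\<eta> = 4\<pi>^2/\<surd>3\<close>. If \<open>d^N M(2^k, d) \<rightarrow> L\<close>,
  the recursion gives \<open>d^(2N+1) M(2^(k+1), d) \<rightarrow> L^2 \<integral> (sin \<eta> cos \<eta>)^N d\<eta> = L^2 B(2^(k-1), 2^(k-1)) / 2\<close>;
  since \<open>S_(2n)^2 B(n, n) = 2 S_(4n)\<close>, the normalised density squares and halves at each doubling
  of the dimension. The dominating functions come from a uniform bound on \<open>d^N M(2^k, d)\<close>,
  proved by the same induction.\<close>

section \<open>Elementary limits and integrals\<close>

lemma arcsin_ge_self:
  assumes "0 \<le> y" "y \<le> 1"
  shows "y \<le> arcsin y"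
proof -
  have "sin (arcsin y) \<le> arcsin y"
    using arcsin_nonneg[of y] assms by (intro sin_x_le_x) simp
  then show ?thesis using assms by simp
qed

lemma filterlim_at_right_0_iff:
  "filterlim f (at_right 0) F \<longleftrightarrow> (f \<longlongrightarrow> (0::real)) F \<and> eventually (\<lambda>x. f x > 0) F"
  by (auto simp: filterlim_at elim: eventually_mono)

lemma tendsto_div_arcsin:
  assumes "filterlim u (at_right 0) F"
  shows "((\<lambda>x. u x / arcsin (u x)) \<longlongrightarrow> 1) F"
proof -
  have "((\<lambda>y. arcsin y / y) \<longlongrightarrow> 1) (at 0)"
    using DERIV_arcsin[of 0] by (simp add: DERIV_def)
  moreover have "filterlim u (at 0) F"
    using assms by (auto simp: filterlim_at elim: eventually_mono)
  ultimately have "((\<lambda>x. arcsin (u x) / u x) \<longlongrightarrow> 1) F"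
    by (rule filterlim_compose)
  from tendsto_inverse[OF this] show ?thesis by simp
qed

lemma tendsto_sin_div:
  fixes z :: "'a \<Rightarrow> real"
  assumes "filterlim z (at 0) F"
  shows "((\<lambda>x. sin (z x) / z x) \<longlongrightarrow> 1) F"
proof -
  have "((\<lambda>y::real. sin y / y) \<longlongrightarrow> 1) (at 0)"
    using DERIV_sin[of 0] by (simp add: DERIV_def)
  then show ?thesis using assms by (rule filterlim_compose)
qed

lemma tendsto_mult_floor:
  fixes D X :: "'a \<Rightarrow> real"
  assumes D: "filterlim D (at_right 0) F" and L: "((\<lambda>x. D x * X x) \<longlongrightarrow> L) F"
  shows "((\<lambda>x. D x * of_int \<lfloor>X x\<rfloor>) \<longlongrightarrow> L) F"
proof (rule tendsto_sandwich[of "\<lambda>x. D x * X x - D x" _ _ "\<lambda>x. D x * X x"])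
  have D0: "(D \<longlongrightarrow> 0) F" and Dpos: "eventually (\<lambda>x. D x > 0) F"
    using D unfolding filterlim_at_right_0_iff by auto
  show "eventually (\<lambda>x. D x * X x - D x \<le> D x * of_int \<lfloor>X x\<rfloor>) F"
    using Dpos
  proof eventually_elim
    case (elim x)
    have "D x * (X x - 1) \<le> D x * of_int \<lfloor>X x\<rfloor>"
      using elim by (intro mult_left_mono) linarith+
    then show ?case by (simp add: algebra_simps)
  qed
  show "eventually (\<lambda>x. D x * of_int \<lfloor>X x\<rfloor> \<le> D x * X x) F"
    using Dpos by eventually_elim (intro mult_left_mono, auto)
  show "((\<lambda>x. D x * X x - D x) \<longlongrightarrow> L) F"
    using tendsto_diff[OF L D0] by simp
qed (rule L)

lemma tendsto_mult_floor_div_arcsin: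
  fixes D c :: "'a \<Rightarrow> real"
  assumes D: "filterlim D (at_right 0) F" and c: "(c \<longlongrightarrow> c0) F" and c0: "c0 > 0"
  shows "((\<lambda>x. D x * of_int \<lfloor>a / arcsin (D x * c x)\<rfloor>) \<longlongrightarrow> a / c0) F"
proof (rule tendsto_mult_floor[OF D])
  have D0: "(D \<longlongrightarrow> 0) F" and Dpos: "eventually (\<lambda>x. D x > 0) F"
    using D unfolding filterlim_at_right_0_iff by auto
  have cpos: "eventually (\<lambda>x. c x > 0) F" using order_tendstoD(1)[OF c c0] .
  define u where "u x = D x * c x" for x
  have "(u \<longlongrightarrow> 0 * c0) F" unfolding u_def by (intro tendsto_mult D0 c)
  moreover have "eventually (\<lambda>x. u x > 0) F" using Dpos cpos by eventually_elim (simp add: u_def)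
  ultimately have u: "filterlim u (at_right 0) F" unfolding filterlim_at_right_0_iff by simp
  have "((\<lambda>x. a / c x * (u x / arcsin (u x))) \<longlongrightarrow> a / c0 * 1) F"
    using c0 by (intro tendsto_intros c tendsto_div_arcsin[OF u]) auto
  moreover have "eventually (\<lambda>x. a / c x * (u x / arcsin (u x)) = D x * (a / arcsin (D x * c x))) F"
    using cpos by eventually_elim (simp add: u_def)
  ultimately show "((\<lambda>x. D x * (a / arcsin (D x * c x))) \<longlongrightarrow> a / c0) F"
    by (auto intro: Lim_transform_eventually)
qed

lemma tendsto_sin_pi_div:
  fixes D m :: "'a \<Rightarrow> real"
  assumes D: "filterlim D (at_right 0) F" and Dm: "((\<lambda>x. D x * m x) \<longlongrightarrow> L) F" and L: "L > 0"
  shows "((\<lambda>x. sin (pi / (2 * m x)) / D x) \<longlongrightarrow> pi / (2 * L)) F"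
proof -
  have D0: "(D \<longlongrightarrow> 0) F" and Dpos: "eventually (\<lambda>x. D x > 0) F"
    using D unfolding filterlim_at_right_0_iff by auto
  have Dm_pos: "eventually (\<lambda>x. D x * m x > 0) F" using order_tendstoD(1)[OF Dm L] .
  define z where "z x = pi / (2 * m x)" for x
  have z_nz: "eventually (\<lambda>x. z x \<noteq> 0) F" using Dm_pos by eventually_elim (auto simp: z_def)
  have "((\<lambda>x. pi / (2 * (D x * m x))) \<longlongrightarrow> pi / (2 * L)) F"
    using L by (intro tendsto_intros Dm) auto
  moreover have "eventually (\<lambda>x. pi / (2 * (D x * m x)) = z x / D x) F"
    using Dpos by eventually_elim (simp add: z_def field_simps)
  ultimately have zD: "((\<lambda>x. z x / D x) \<longlongrightarrow> pi / (2 * L)) F" by (rule Lim_transform_eventually)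
  have "((\<lambda>x. D x * (z x / D x)) \<longlongrightarrow> 0 * (pi / (2 * L))) F" by (intro tendsto_mult D0 zD)
  moreover have "eventually (\<lambda>x. D x * (z x / D x) = z x) F" using Dpos by eventually_elim auto
  ultimately have "(z \<longlongrightarrow> 0) F" by (auto intro: Lim_transform_eventually)
  with z_nz have "filterlim z (at 0) F" by (simp add: filterlim_at)
  then have "((\<lambda>x. sin (z x) / z x * (z x / D x)) \<longlongrightarrow> 1 * (pi / (2 * L))) F"
    by (intro tendsto_mult tendsto_sin_div zD)
  moreover have "eventually (\<lambda>x. sin (z x) / z x * (z x / D x) = sin (z x) / D x) F"
    using z_nz by eventually_elim simp
  ultimately show ?thesis unfolding z_def by (auto intro: Lim_transform_eventually)
qed

lemma filterlim_fst_div_at_right: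
  fixes f :: "real \<times> 'a \<Rightarrow> real"
  assumes f: "(f \<longlongrightarrow> c) (at_right 0 \<times>\<^sub>F G)" and c: "c > 0"
  shows "filterlim (\<lambda>q. fst q / f q) (at_right 0) (at_right 0 \<times>\<^sub>F G)"
proof -
  have fst: "(fst \<longlongrightarrow> 0) (at_right (0::real) \<times>\<^sub>F G)" "eventually (\<lambda>q. fst q > 0) (at_right (0::real) \<times>\<^sub>F G)"
    using filterlim_fst[of "at_right (0::real)" G] unfolding filterlim_at_right_0_iff by auto
  have "((\<lambda>q. fst q / f q) \<longlongrightarrow> 0 / c) (at_right 0 \<times>\<^sub>F G)"
    using f fst c by (intro tendsto_divide) auto
  moreover have "eventually (\<lambda>q. fst q / f q > 0) (at_right 0 \<times>\<^sub>F G)"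
    using order_tendstoD(1)[OF f c] fst(2) by (auto elim: eventually_elim2)
  ultimately show ?thesis unfolding filterlim_at_right_0_iff by simp
qed

lemma sum_int_interval_abs:
  fixes g :: "int \<Rightarrow> real"
  assumes "0 \<le> T"
  shows "(\<Sum>i\<in>{-T..T}. g \<bar>i\<bar>) = g 0 + 2 * (\<Sum>i\<in>{1..T}. g i)"
proof -
  obtain n where n: "T = int n" using assms nonneg_eq_int by blast
  have "(\<Sum>i\<in>{-int n..int n}. g \<bar>i\<bar>) = g 0 + 2 * (\<Sum>i\<in>{1..int n}. g i)"
  proof (induction n)
    case (Suc n)
    have "{-int (Suc n)..int (Suc n)} = insert (-int (Suc n)) (insert (int (Suc n)) {-int n..int n})"
      and "{1..int (Suc n)} = insert (int (Suc n)) {1..int n}"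
      by auto
    with Suc show ?case by (simp add: add.commute)
  qed simp
  then show ?thesis using n by simp
qed

lemma has_integral_power_Beta:
  assumes "n \<ge> 1"
  shows "((\<lambda>t. t ^ (n - 1) * (1 - t) ^ (n - 1)) has_integral Beta (real n) (real n)) {0..1::real}"
proof (rule has_integral_spike_finite[OF _ _ has_integral_Beta_real])
  fix t :: real assume "t \<in> {0..1} - {0, 1}"
  then have "0 < t" "0 < 1 - t" by auto
  moreover have "real n - 1 = real (n - 1)" using assms by simp
  ultimately show "t ^ (n - 1) * (1 - t) ^ (n - 1) = t powr (real n - 1) * (1 - t) powr (real n - 1)"
    by (simp only: powr_realpow)
qed (use assms in auto)

lemma has_integral_sin_cos_power_Beta:
  assumes n: "n \<ge> 1"
  shows "((\<lambda>x. (sin x * cos x) ^ (2 * n - 1)) has_integral Beta (real n) (real n) / 2) {0..pi/2}"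
proof -
  define f where "f = (\<lambda>t::real. t ^ (n - 1) * (1 - t) ^ (n - 1))"
  have "(f has_integral Beta (real n) (real n)) {0..1}"
    unfolding f_def by (rule has_integral_power_Beta[OF n])
  then have integral_f: "integral {(sin 0)\<^sup>2..(sin (pi/2))\<^sup>2} f = Beta (real n) (real n)"
    by (simp add: integral_unique)
  have substitution: "((\<lambda>x. (2 * sin x * cos x) *\<^sub>R f ((sin x)\<^sup>2)) has_integral
      integral {(sin 0)\<^sup>2..(sin (pi/2))\<^sup>2} f) {0..pi/2}"
  proof (rule has_integral_substitution[where c = 0 and d = 1])
    show "(\<lambda>x. (sin x)\<^sup>2) ` {0..pi/2} \<subseteq> {0..1}" by (auto simp: abs_square_le_1)
    show "continuous_on {0..1} f" unfolding f_def by (intro continuous_intros)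
    show "((\<lambda>x. (sin x)\<^sup>2) has_real_derivative 2 * sin x * cos x) (at x within {0..pi/2})" for x
      by (auto intro!: derivative_eq_intros)
  qed simp_all
  have integrand: "(2 * sin x * cos x) *\<^sub>R f ((sin x)\<^sup>2) = 2 * (sin x * cos x) ^ (2 * n - 1)" for x
  proof -
    obtain k where k: "n = Suc k" using n by (cases n) auto
    have "2 * n - 1 = Suc (2 * k)" using k by simp
    then have "(sin x * cos x) ^ (2 * n - 1) = sin x * cos x * ((sin x * cos x)\<^sup>2) ^ k"
      by (simp only: power_Suc power_mult)
    also have "\<dots> = sin x * cos x * ((sin x)\<^sup>2) ^ k * (1 - (sin x)\<^sup>2) ^ k"
      by (simp only: power_mult_distrib cos_squared_eq mult.assoc)
    finally have eq: "(sin x * cos x) ^ (2 * n - 1) = sin x * cos x * ((sin x)\<^sup>2) ^ k * (1 - (sin x)\<^sup>2) ^ k" .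
    show ?thesis unfolding eq unfolding f_def k by (simp add: mult_ac)
  qed
  have "((\<lambda>x. 2 * (sin x * cos x) ^ (2 * n - 1)) has_integral Beta (real n) (real n)) {0..pi/2}"
    using substitution unfolding integral_f integrand .
  from has_integral_mult_right[OF this, of "1/2"] show ?thesis by simp
qed

lemma two_power_Suc_minus_1: "(2::nat) ^ Suc m - 1 = 2 * (2 ^ m - 1) + 1"
  using one_le_power[of "2::nat" m] by (simp only: power_Suc) linarith

section \<open>The latitude grid and its Riemann sums\<close>

abbreviation schf_layers :: "real \<Rightarrow> int set" where
  "schf_layers d \<equiv> {-(schf_t d div 2)..schf_t d div 2}"

lemma schf_deta_ge:
  assumes "0 < d" "d \<le> 2"
  shows "d \<le> schf_deta d"
  using arcsin_ge_self[of "d/2"] assms unfolding schf_deta_def by auto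

lemma schf_deta_pos: "0 < d \<Longrightarrow> d \<le> 2 \<Longrightarrow> 0 < schf_deta d"
  using schf_deta_ge by fastforce

lemma schf_deta_le_pi: "0 < d \<Longrightarrow> d \<le> 2 \<Longrightarrow> schf_deta d \<le> pi"
  using arcsin_ubound[of "d/2"] unfolding schf_deta_def by auto

lemma schf_t_eq: "schf_t d = \<lfloor>pi / (2 * schf_deta d)\<rfloor>"
  unfolding schf_t_def schf_deta_def by (simp add: mult.assoc)

lemma schf_t_div_2_nonneg: "0 < d \<Longrightarrow> d \<le> 2 \<Longrightarrow> 0 \<le> schf_t d div 2"
  using schf_deta_pos[of d] unfolding schf_t_eq by simp

lemma schf_layers_extent:
  assumes "0 < d" "d \<le> 2"
  shows "pi/4 - schf_deta d \<le> of_int (schf_t d div 2) * schf_deta d"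
    and "of_int (schf_t d div 2) * schf_deta d \<le> pi/4"
proof -
  have D: "schf_deta d > 0" using schf_deta_pos assms .
  have "pi / (2 * schf_deta d) - 2 \<le> of_int (2 * (schf_t d div 2))"
    and "of_int (2 * (schf_t d div 2)) \<le> pi / (2 * schf_deta d)"
    unfolding schf_t_eq by linarith+
  then show "pi/4 - schf_deta d \<le> of_int (schf_t d div 2) * schf_deta d"
    and "of_int (schf_t d div 2) * schf_deta d \<le> pi/4"
    using D by (simp_all add: field_simps)
qed

lemma schf_eta_range:
  assumes "0 < d" "d \<le> 2" "i \<in> schf_layers d"
  shows "0 \<le> schf_eta d i" "schf_eta d i \<le> pi/2"
proof -
  have D: "schf_deta d > 0" using schf_deta_pos assms by simp
  have "\<bar>of_int i\<bar> * schf_deta d \<le> of_int (schf_t d div 2) * schf_deta d"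
    using assms D by (intro mult_right_mono) auto
  also have "\<dots> \<le> pi/4" using schf_layers_extent(2)[OF assms(1,2)] .
  finally have "\<bar>of_int i * schf_deta d\<bar> \<le> pi/4" using D by (simp add: abs_mult)
  then show "0 \<le> schf_eta d i" "schf_eta d i \<le> pi/2" unfolding schf_eta_def by auto
qed

lemma tendsto_schf_deta: "(schf_deta \<longlongrightarrow> 0) (at_right 0)"
proof -
  have "((\<lambda>d. 2 * arcsin (d/2)) \<longlongrightarrow> 2 * arcsin (0/2)) (at_right (0::real))"
    by (intro tendsto_mult tendsto_const isCont_tendsto_compose[OF isCont_arcsin] tendsto_eq_intros) auto
  then show ?thesis unfolding schf_deta_def by simp
qed

lemma tendsto_div_schf_deta: "((\<lambda>d. d / schf_deta d) \<longlongrightarrow> 1) (at_right 0)"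
proof -
  have "filterlim (\<lambda>d::real. d/2) (at_right 0) (at_right 0)"
    unfolding filterlim_at_right_0_iff
    by (auto intro!: tendsto_eq_intros simp: eventually_at_right_less)
  from tendsto_div_arcsin[OF this] show ?thesis
    unfolding schf_deta_def by (simp add: field_simps)
qed

lemma schf_layer_sum_abs_le:
  assumes d: "0 < d" "d \<le> 2" and K: "\<And>\<eta>. 0 \<le> \<eta> \<Longrightarrow> \<eta> \<le> pi/2 \<Longrightarrow> \<bar>\<phi> \<eta>\<bar> \<le> K"
  shows "\<bar>\<Sum>i\<in>schf_layers d. d * \<phi> (schf_eta d i)\<bar> \<le> (pi/2 + 2) * K"
proof -
  define T where "T = schf_t d div 2"
  have T0: "0 \<le> T" using schf_t_div_2_nonneg[OF d] unfolding T_def .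
  have K0: "0 \<le> K" using K[of 0] by force
  have "\<bar>\<Sum>i\<in>{-T..T}. d * \<phi> (schf_eta d i)\<bar> \<le> (\<Sum>i\<in>{-T..T}. d * K)"
    using K d schf_eta_range[OF d] unfolding T_def
    by (intro order.trans[OF sum_abs] sum_mono) (auto simp: abs_mult intro!: mult_left_mono)
  also have "\<dots> = (2 * of_int T + 1) * d * K" using T0 by simp
  also have "\<dots> \<le> (pi/2 + 2) * K"
  proof (rule mult_right_mono[OF _ K0])
    have "of_int T * d \<le> of_int T * schf_deta d"
      using schf_deta_ge[OF d] T0 by (intro mult_left_mono) auto
    also have "\<dots> \<le> pi/4" using schf_layers_extent(2)[OF d] unfolding T_def .
    finally show "(2 * of_int T + 1) * d \<le> pi/2 + 2" using d by (simp add: algebra_simps)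
  qed
  finally show ?thesis unfolding T_def .
qed

definition schf_cell :: "real \<Rightarrow> int \<Rightarrow> real set" where
  "schf_cell d i = {schf_eta d i - schf_deta d / 2..<schf_eta d i + schf_deta d / 2}"

definition schf_layer_of :: "real \<Rightarrow> real \<Rightarrow> int" where
  "schf_layer_of d x = \<lfloor>(x - pi/4) / schf_deta d + 1/2\<rfloor>"

lemma mem_schf_cell_iff:
  assumes "0 < d" "d \<le> 2"
  shows "x \<in> schf_cell d i \<longleftrightarrow> schf_layer_of d x = i"
proof -
  have D: "schf_deta d > 0" using schf_deta_pos assms .
  have "x \<in> schf_cell d i \<longleftrightarrow>
        of_int i \<le> (x - pi/4) / schf_deta d + 1/2 \<and> (x - pi/4) / schf_deta d + 1/2 < of_int i + 1"
    using D unfolding schf_cell_def schf_eta_def by (auto simp: field_simps)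
  also have "\<dots> \<longleftrightarrow> schf_layer_of d x = i"
    unfolding schf_layer_of_def by (subst eq_commute) (simp add: floor_eq_iff)
  finally show ?thesis .
qed

lemma schf_eta_layer_of:
  assumes "0 < d" "d \<le> 2"
  shows "x - schf_deta d / 2 < schf_eta d (schf_layer_of d x)"
    and "schf_eta d (schf_layer_of d x) \<le> x + schf_deta d / 2"
  using mem_schf_cell_iff[OF assms, of x "schf_layer_of d x"] by (auto simp: schf_cell_def)

lemma schf_layer_of_mem:
  assumes d: "0 < d" "d \<le> 2" and x: "schf_deta d / 2 \<le> x" "x < pi/2 - schf_deta d / 2"
  shows "schf_layer_of d x \<in> schf_layers d"
proof -
  define T where "T = schf_t d div 2"
  have D: "schf_deta d > 0" using schf_deta_pos d .
  have "pi/4 - schf_deta d \<le> of_int T * schf_deta d"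
    using schf_layers_extent(1)[OF d] unfolding T_def .
  then have "- (of_int T + 1/2) \<le> (x - pi/4) / schf_deta d" "(x - pi/4) / schf_deta d < of_int T + 1/2"
    using x D by (simp_all add: field_simps)
  then have "- T \<le> schf_layer_of d x" "schf_layer_of d x \<le> T"
    unfolding schf_layer_of_def by linarith+
  then show ?thesis unfolding T_def by simp
qed

text \<open>The weight \<open>d / \<Delta>\<eta>\<close> makes the integral of the step function equal to the layer sum;
  it tends to \<open>1\<close>, so the step functions converge to the pointwise limit of \<open>\<psi>\<close>.\<close>

definition schf_step :: "(real \<Rightarrow> real \<Rightarrow> real) \<Rightarrow> real \<Rightarrow> real \<Rightarrow> real" where
  "schf_step \<psi> d x =
     (\<Sum>i\<in>schf_layers d. (d / schf_deta d * \<psi> d (schf_eta d i)) * indicator (schf_cell d i) x)"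

lemma schf_step_eq:
  assumes "0 < d" "d \<le> 2"
  shows "schf_step \<psi> d x =
    (if schf_layer_of d x \<in> schf_layers d
     then d / schf_deta d * \<psi> d (schf_eta d (schf_layer_of d x)) else 0)"
proof -
  have "schf_step \<psi> d x = (\<Sum>i\<in>schf_layers d.
          if i = schf_layer_of d x then d / schf_deta d * \<psi> d (schf_eta d i) else 0)"
    unfolding schf_step_def using mem_schf_cell_iff[OF assms, of x]
    by (intro sum.cong) (auto simp: indicator_def)
  then show ?thesis by (simp add: sum.delta)
qed

lemma integral_schf_step:
  assumes "0 < d" "d \<le> 2"
  shows "integral\<^sup>L lborel (schf_step \<psi> d) = (\<Sum>i\<in>schf_layers d. d * \<psi> d (schf_eta d i))"
proof -
  have D: "schf_deta d > 0" using schf_deta_pos assms .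
  have "integral\<^sup>L lborel (schf_step \<psi> d) = (\<Sum>i\<in>schf_layers d.
          (d / schf_deta d * \<psi> d (schf_eta d i)) * measure lborel (schf_cell d i))"
    unfolding schf_step_def schf_cell_def
    by (subst Bochner_Integration.integral_sum)
       (use D in \<open>auto intro!: integrable_mult_right integrable_real_indicator\<close>)
  also have "\<dots> = (\<Sum>i\<in>schf_layers d. d * \<psi> d (schf_eta d i))"
    using D unfolding schf_cell_def by (intro sum.cong) auto
  finally show ?thesis .
qed

lemma schf_step_abs_le:
  assumes d: "0 < d" "d \<le> 2"
    and bound: "\<And>\<eta>. 0 \<le> \<eta> \<Longrightarrow> \<eta> \<le> pi/2 \<Longrightarrow> \<bar>\<psi> d \<eta>\<bar> \<le> C"
  shows "\<bar>schf_step \<psi> d x\<bar> \<le> \<bar>C\<bar> * indicator {-2..4} x"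
proof (cases "schf_layer_of d x \<in> schf_layers d")
  case True
  define \<eta> where "\<eta> = schf_eta d (schf_layer_of d x)"
  have \<eta>: "0 \<le> \<eta>" "\<eta> \<le> pi/2" unfolding \<eta>_def using schf_eta_range[OF d True] by auto
  have ratio: "0 < d / schf_deta d" "d / schf_deta d \<le> 1"
    using schf_deta_ge[OF d] schf_deta_pos[OF d] d by auto
  have "\<bar>d / schf_deta d * \<psi> d \<eta>\<bar> = d / schf_deta d * \<bar>\<psi> d \<eta>\<bar>"
    by (simp only: abs_mult abs_of_pos[OF ratio(1)])
  also have "\<dots> \<le> \<bar>\<psi> d \<eta>\<bar>" using ratio by (intro mult_left_le_one_le) auto
  also have "\<dots> \<le> \<bar>C\<bar>" using bound[OF \<eta>] by simp
  finally have "\<bar>d / schf_deta d * \<psi> d \<eta>\<bar> \<le> \<bar>C\<bar>" .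
  moreover have "x \<in> {-2..4}"
    using schf_eta_layer_of[OF d, of x] \<eta> schf_deta_le_pi[OF d] pi_less_4 unfolding \<eta>_def by auto
  moreover have "schf_step \<psi> d x = d / schf_deta d * \<psi> d \<eta>"
    using schf_step_eq[OF d] True unfolding \<eta>_def by simp
  ultimately show ?thesis by (simp add: indicator_def)
qed (simp add: schf_step_eq[OF d] del: atLeastAtMost_iff)

lemma eventually_schf_deta_less:
  assumes "c > 0"
  shows "eventually (\<lambda>d. 0 < d \<and> d \<le> 2 \<and> schf_deta d < c) (at_right 0)"
proof -
  have "eventually (\<lambda>d::real. 0 < d \<and> d \<le> 2) (at_right 0)"
    unfolding eventually_at_right_field by (intro exI[of _ 2]) auto
  moreover have "eventually (\<lambda>d. schf_deta d < c) (at_right 0)"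
    using order_tendstoD(2)[OF tendsto_schf_deta assms] .
  ultimately show ?thesis by eventually_elim auto
qed

lemma tendsto_schf_eta_layer_of:
  "((\<lambda>d. schf_eta d (schf_layer_of d x)) \<longlongrightarrow> x) (at_right 0)"
proof (rule tendsto_sandwich[of "\<lambda>d. x - schf_deta d / 2" _ _ "\<lambda>d. x + schf_deta d / 2"])
  have ev: "eventually (\<lambda>d::real. 0 < d \<and> d \<le> 2) (at_right 0)"
    using eventually_schf_deta_less[of 1] by (auto elim: eventually_mono)
  show "eventually (\<lambda>d. x - schf_deta d / 2 \<le> schf_eta d (schf_layer_of d x)) (at_right 0)"
    using ev by eventually_elim (use schf_eta_layer_of in \<open>auto simp: less_imp_le\<close>)
  show "eventually (\<lambda>d. schf_eta d (schf_layer_of d x) \<le> x + schf_deta d / 2) (at_right 0)"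
    using ev by eventually_elim (use schf_eta_layer_of in auto)
  show "((\<lambda>d. x - schf_deta d / 2) \<longlongrightarrow> x) (at_right 0)"
    using tendsto_diff[OF tendsto_const tendsto_divide[OF tendsto_schf_deta tendsto_const]] by force
  show "((\<lambda>d. x + schf_deta d / 2) \<longlongrightarrow> x) (at_right 0)"
    using tendsto_add[OF tendsto_const tendsto_divide[OF tendsto_schf_deta tendsto_const]] by force
qed

lemma tendsto_schf_step:
  assumes lim: "\<And>x. 0 < x \<Longrightarrow> x < pi/2 \<Longrightarrow> ((\<lambda>(d, \<eta>). \<psi> d \<eta>) \<longlongrightarrow> G x) (at_right 0 \<times>\<^sub>F nhds x)"
    and x: "x \<noteq> 0" "x \<noteq> pi/2"
  shows "((\<lambda>d. schf_step \<psi> d x) \<longlongrightarrow> indicator {0..pi/2} x * G x) (at_right 0)"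
proof -
  consider "x < 0 \<or> pi/2 < x" | "0 < x" "x < pi/2" using x by linarith
  then show ?thesis
  proof cases
    case outside: 1
    have "eventually (\<lambda>d. 0 < d \<and> d \<le> 2 \<and> schf_deta d < 2 * max (- x) (x - pi/2)) (at_right 0)"
      using outside by (intro eventually_schf_deta_less) (auto simp: less_max_iff_disj)
    then have "eventually (\<lambda>d. schf_step \<psi> d x = 0) (at_right 0)"
    proof eventually_elim
      case (elim d)
      have "schf_layer_of d x \<notin> schf_layers d"
        using outside elim schf_eta_layer_of[of d x] schf_eta_range[of d "schf_layer_of d x"]
        by (auto simp: max_def split: if_splits)
      then show ?case using elim by (simp add: schf_step_eq del: atLeastAtMost_iff)
    qed
    moreover have "indicator {0..pi/2} x = (0::real)" using outside by auto
    ultimately show ?thesis by (simp add: tendsto_eventually)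
  next
    case inside: 2
    have "eventually (\<lambda>d. 0 < d \<and> d \<le> 2 \<and> schf_deta d < min x (pi/2 - x)) (at_right 0)"
      using inside by (intro eventually_schf_deta_less) auto
    then have "eventually (\<lambda>d. d / schf_deta d * \<psi> d (schf_eta d (schf_layer_of d x)) = schf_step \<psi> d x)
        (at_right 0)"
    proof eventually_elim
      case (elim d)
      then have "schf_layer_of d x \<in> schf_layers d" using inside by (intro schf_layer_of_mem) auto
      then show ?case using elim by (simp add: schf_step_eq del: atLeastAtMost_iff)
    qed
    moreover have "((\<lambda>d. d / schf_deta d * \<psi> d (schf_eta d (schf_layer_of d x))) \<longlongrightarrow> 1 * G x) (at_right 0)"
      using filterlim_compose[OF lim[OF inside] filterlim_Pair[OF filterlim_ident tendsto_schf_eta_layer_of]]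
      by (intro tendsto_mult tendsto_div_schf_deta) simp
    ultimately show ?thesis using inside by (auto intro: Lim_transform_eventually)
  qed
qed

lemma schf_layer_sum_tendsto_integral:
  assumes lim: "\<And>x. 0 < x \<Longrightarrow> x < pi/2 \<Longrightarrow> ((\<lambda>(d, \<eta>). \<psi> d \<eta>) \<longlongrightarrow> G x) (at_right 0 \<times>\<^sub>F nhds x)"
    and bound: "\<And>d \<eta>. 0 < d \<Longrightarrow> d \<le> 2 \<Longrightarrow> 0 \<le> \<eta> \<Longrightarrow> \<eta> \<le> pi/2 \<Longrightarrow> \<bar>\<psi> d \<eta>\<bar> \<le> C"
    and G: "continuous_on {0..pi/2} G"
  shows "((\<lambda>d. \<Sum>i\<in>schf_layers d. d * \<psi> d (schf_eta d i)) \<longlongrightarrow> integral {0..pi/2} G) (at_right 0)"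
proof (rule tendsto_at_right_sequentially[of 0 2])
  fix S :: "nat \<Rightarrow> real"
  assume S0: "\<And>n. 0 < S n" and S2: "\<And>n. S n < 2" and "decseq S" and "S \<longlonglongrightarrow> 0"
  then have S: "filterlim S (at_right 0) sequentially"
    by (intro tendsto_imp_filterlim_at_right) auto
  have G_int: "set_integrable lborel {0..pi/2} G"
    by (rule borel_integrable_atLeastAtMost'[OF G])
  have "(\<lambda>n. integral\<^sup>L lborel (schf_step \<psi> (S n))) \<longlonglongrightarrow> integral\<^sup>L lborel (\<lambda>x. indicator {0..pi/2} x * G x)"
  proof (rule integral_dominated_convergence[where w="\<lambda>x. \<bar>C\<bar> * indicator {-2..4::real} x"])
    show "(\<lambda>x. indicator {0..pi/2} x * G x) \<in> borel_measurable lborel"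
      using G_int by (auto simp: set_integrable_def)
    show "\<And>n. schf_step \<psi> (S n) \<in> borel_measurable lborel"
      unfolding schf_step_def schf_cell_def by measurable
    show "integrable lborel (\<lambda>x. \<bar>C\<bar> * indicator {-2..4::real} x)"
      by (intro integrable_mult_right integrable_real_indicator) auto
    have "AE x in lborel. x \<noteq> 0 \<and> x \<noteq> pi/2"
      using AE_lborel_singleton[of 0] AE_lborel_singleton[of "pi/2"] by eventually_elim auto
    then show "AE x in lborel. (\<lambda>n. schf_step \<psi> (S n) x) \<longlonglongrightarrow> indicator {0..pi/2} x * G x"
      by eventually_elim (auto intro: filterlim_compose[OF tendsto_schf_step[OF lim] S])
    show "\<And>n. AE x in lborel. norm (schf_step \<psi> (S n) x) \<le> \<bar>C\<bar> * indicator {-2..4::real} x"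
      using schf_step_abs_le bound S0 S2 by (simp add: less_imp_le)
  qed
  moreover have "integral\<^sup>L lborel (\<lambda>x. indicator {0..pi/2} x * G x) = integral {0..pi/2} G"
    using set_borel_integral_eq_integral(2)[OF G_int] by (simp add: set_lebesgue_integral_def)
  ultimately show "(\<lambda>n. \<Sum>i\<in>schf_layers (S n). S n * \<psi> (S n) (schf_eta (S n) i)) \<longlonglongrightarrow> integral {0..pi/2} G"
    using integral_schf_step S0 S2 by (simp add: less_imp_le)
qed simp

section \<open>The base code SCHF[4]\<close>

context
  fixes D E :: "'a \<Rightarrow> real" and F y
  assumes D: "filterlim D (at_right 0) F" and E: "(E \<longlongrightarrow> y) F" and y: "0 < y" "y < pi/2"
begin

private lemma
  shows D0: "(D \<longlongrightarrow> 0) F" and Dpos: "eventually (\<lambda>x. D x > 0) F"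
    and cos_pos: "cos y > 0" and sin_pos: "sin y > 0"
    and tendsto_cos: "((\<lambda>x. cos (E x)) \<longlongrightarrow> cos y) F"
    and tendsto_sin: "((\<lambda>x. sin (E x)) \<longlongrightarrow> sin y) F"
  using D y by (auto simp: filterlim_at_right_0_iff intro!: cos_gt_zero_pi sin_gt_zero
      isCont_tendsto_compose[OF _ E])

lemma tendsto_schf_m: "((\<lambda>x. D x * of_int (schf_m (D x) (E x))) \<longlongrightarrow> 2 * pi * cos y) F"
proof -
  have c: "((\<lambda>x. 1 / (2 * cos (E x))) \<longlongrightarrow> 1 / (2 * cos y)) F"
    using cos_pos by (intro tendsto_intros tendsto_cos) auto
  have val: "pi / (1 / (2 * cos y)) = 2 * pi * cos y" by simp
  have "eventually (\<lambda>x. cos (E x) > cos y / 2) F"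
    using order_tendstoD(1)[OF tendsto_cos, of "cos y / 2"] cos_pos by simp
  moreover have "eventually (\<lambda>x. D x < cos y) F" using order_tendstoD(2)[OF D0 cos_pos] .
  ultimately have "eventually (\<lambda>x. D x * of_int \<lfloor>pi / arcsin (D x * (1 / (2 * cos (E x))))\<rfloor> =
      D x * of_int (schf_m (D x) (E x))) F"
    by eventually_elim (auto simp: schf_m_def)
  with tendsto_mult_floor_div_arcsin[OF D c, of pi, unfolded val] cos_pos show ?thesis
    by (auto intro: Lim_transform_eventually)
qed

lemma tendsto_schf_n2: "((\<lambda>x. D x * of_int (schf_n2 (D x) (E x))) \<longlongrightarrow> 4 * pi * sin y) F"
proof -
  have c: "((\<lambda>x. 1 / (2 * sin (E x))) \<longlongrightarrow> 1 / (2 * sin y)) F"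
    using sin_pos by (intro tendsto_intros tendsto_sin) auto
  have val: "2 * pi / (1 / (2 * sin y)) = 4 * pi * sin y" by simp
  have "eventually (\<lambda>x. sin (E x) > sin y / 2) F"
    using order_tendstoD(1)[OF tendsto_sin, of "sin y / 2"] sin_pos by simp
  moreover have "eventually (\<lambda>x. D x < sin y) F" using order_tendstoD(2)[OF D0 sin_pos] .
  ultimately have "eventually (\<lambda>x. D x * of_int \<lfloor>2 * pi / arcsin (D x * (1 / (2 * sin (E x))))\<rfloor> =
      D x * of_int (schf_n2 (D x) (E x))) F"
    by eventually_elim (auto simp: schf_n2_def)
  with tendsto_mult_floor_div_arcsin[OF D c, of "2 * pi", unfolded val] sin_pos show ?thesis
    by (auto intro: Lim_transform_eventually)
qed

text \<open>The radicand of \<open>n_1\<close> is \<open>d^2 w\<close> with \<open>w \<rightarrow> 1/(4 sin^2 y) - 1/(16 sin^2 y) = 3/(16 sin^2 y)\<close>,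
  because \<open>sin (\<pi>/2m) / d \<rightarrow> 1/(4 cos y)\<close>.\<close>

lemma tendsto_schf_n1: "((\<lambda>x. D x * of_int (schf_n1 (D x) (E x))) \<longlongrightarrow> 4 * pi * sin y / sqrt 3) F"
proof -
  define m where "m x = (of_int (schf_m (D x) (E x)) :: real)" for x
  have "((\<lambda>x. sin (pi / (2 * m x)) / D x) \<longlongrightarrow> pi / (2 * (2 * pi * cos y))) F"
    using tendsto_sin_pi_div[OF D tendsto_schf_m[unfolded m_def[symmetric]]] cos_pos by simp
  define w where "w x = (1/4) * (1 / sin (E x))\<^sup>2 - (cos (E x) / sin (E x))\<^sup>2 * (sin (pi / (2 * m x)) / D x)\<^sup>2"
    for x
  have "(w \<longlongrightarrow> (1/4) * (1 / sin y)\<^sup>2 - (cos y / sin y)\<^sup>2 * (pi / (2 * (2 * pi * cos y)))\<^sup>2) F"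
    unfolding w_def using sin_pos
    by (intro tendsto_intros tendsto_sin tendsto_cos \<open>((\<lambda>x. sin (pi / (2 * m x)) / D x) \<longlongrightarrow> _) F\<close>) auto
  also have "(1/4) * (1 / sin y)\<^sup>2 - (cos y / sin y)\<^sup>2 * (pi / (2 * (2 * pi * cos y)))\<^sup>2
      = (sqrt 3 / (4 * sin y))\<^sup>2"
    using cos_pos sin_pos by (simp add: field_simps power2_eq_square)
  finally have sqrt_w: "((\<lambda>x. sqrt (w x)) \<longlongrightarrow> sqrt 3 / (4 * sin y)) F"
    using sin_pos by (auto dest: tendsto_real_sqrt)
  have val: "pi / (sqrt 3 / (4 * sin y)) = 4 * pi * sin y / sqrt 3" by simp
  have "eventually (\<lambda>x. D x * of_int \<lfloor>pi / arcsin (D x * sqrt (w x))\<rfloor> =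
      D x * of_int (schf_n1 (D x) (E x))) F"
    using Dpos
  proof eventually_elim
    case (elim x)
    have "(D x)\<^sup>2 / 4 * (1 / sin (E x))\<^sup>2 - (cos (E x) / sin (E x))\<^sup>2 * (sin (pi / (2 * m x)))\<^sup>2
        = (D x)\<^sup>2 * w x"
      unfolding w_def using elim by (simp add: field_simps power2_eq_square)
    then have "D x * sqrt (w x) = sqrt ((D x)\<^sup>2 / 4 * (1 / sin (E x))\<^sup>2
        - (cos (E x) / sin (E x))\<^sup>2 * (sin (pi / (2 * m x)))\<^sup>2)"
      using elim by (simp add: real_sqrt_mult)
    then show ?case unfolding schf_n1_def m_def by simp
  qed
  with tendsto_mult_floor_div_arcsin[OF D sqrt_w, of pi, unfolded val] sin_pos show ?thesis
    by (auto intro: Lim_transform_eventually)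
qed

lemma tendsto_schf_n: "((\<lambda>x. D x * of_int (schf_n (D x) (E x))) \<longlongrightarrow> 4 * pi * sin y / sqrt 3) F"
proof -
  define L where "L = 4 * pi * sin y / sqrt 3"
  have L: "0 < L" "L \<le> 4 * pi * sin y"
    using sin_pos unfolding L_def by (auto simp: field_simps)
  define X where "X x = (of_int (min (schf_n1 (D x) (E x)) (schf_n2 (D x) (E x))) / 2 :: real)" for x
  have D2: "filterlim (\<lambda>x. 2 * D x) (at_right 0) F"
    unfolding filterlim_at_right_0_iff using D0 Dpos by (auto intro: tendsto_eq_intros elim: eventually_mono)
  have "((\<lambda>x. min (D x * of_int (schf_n1 (D x) (E x))) (D x * of_int (schf_n2 (D x) (E x))))
      \<longlongrightarrow> min L (4 * pi * sin y)) F"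
    unfolding L_def by (intro tendsto_min tendsto_schf_n1 tendsto_schf_n2)
  moreover have "eventually (\<lambda>x. min (D x * of_int (schf_n1 (D x) (E x))) (D x * of_int (schf_n2 (D x) (E x)))
      = 2 * D x * X x) F"
    using Dpos by eventually_elim (auto simp: X_def min_def)
  ultimately have "((\<lambda>x. 2 * D x * X x) \<longlongrightarrow> L) F"
    using L by (auto intro: Lim_transform_eventually simp: min_absorb1)
  then have "((\<lambda>x. max (2 * D x * of_int \<lfloor>X x\<rfloor>) (D x)) \<longlongrightarrow> max L 0) F"
    by (intro tendsto_max D0 tendsto_mult_floor[OF D2])
  moreover have "eventually (\<lambda>x. max (2 * D x * of_int \<lfloor>X x\<rfloor>) (D x) = D x * of_int (schf_n (D x) (E x))) F"
    using Dpos by eventually_elim (simp add: schf_n_def X_def of_int_max max_mult_distrib_left)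
  ultimately show ?thesis using L unfolding L_def by (auto intro: Lim_transform_eventually)
qed

lemma tendsto_schf_mn:
  "((\<lambda>x. (D x)\<^sup>2 * of_int (schf_m (D x) (E x) * schf_n (D x) (E x)))
     \<longlongrightarrow> 8 * pi\<^sup>2 / sqrt 3 * (sin y * cos y)) F"
proof -
  have "((\<lambda>x. (D x * of_int (schf_m (D x) (E x))) * (D x * of_int (schf_n (D x) (E x))))
      \<longlongrightarrow> (2 * pi * cos y) * (4 * pi * sin y / sqrt 3)) F"
    by (intro tendsto_mult tendsto_schf_m tendsto_schf_n)
  then show ?thesis by (simp add: power2_eq_square mult_ac)
qed

end

lemma schf_m_bounds:
  assumes d: "0 < d" "d \<le> 2"
  shows "1 \<le> schf_m d \<eta>" "d * of_int (schf_m d \<eta>) \<le> 2 * pi"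
proof -
  have "1 \<le> schf_m d \<eta> \<and> d * of_int (schf_m d \<eta>) \<le> 2 * pi"
  proof (cases "d \<le> 2 * cos \<eta>")
    case True
    define u where "u = d / (2 * cos \<eta>)"
    have c: "cos \<eta> > 0" using True d by auto
    have u: "0 < u" "u \<le> 1" using True c d unfolding u_def by (auto simp: field_simps)
    have a: "0 < arcsin u" "arcsin u \<le> pi/2" "u \<le> arcsin u"
      using arcsin_ge_self[of u] arcsin_ubound[of u] u by auto
    have "2 \<le> pi / arcsin u" using a by (simp add: field_simps)
    then have m1: "1 \<le> schf_m d \<eta>" using True unfolding schf_m_def u_def by (simp add: le_floor_iff)
    have "of_int (schf_m d \<eta>) \<le> pi / arcsin u"
      using True unfolding schf_m_def u_def by simp
    also have "\<dots> \<le> pi / u" using a u by (intro divide_left_mono) auto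
    finally have "d * of_int (schf_m d \<eta>) \<le> d * (pi / u)" using d by (intro mult_left_mono) auto
    also have "\<dots> \<le> 2 * pi"
      using c d cos_le_one[of \<eta>] unfolding u_def by (simp add: field_simps)
    finally show ?thesis using m1 by simp
  qed (use d pi_gt3 in \<open>simp add: schf_m_def\<close>)
  then show "1 \<le> schf_m d \<eta>" "d * of_int (schf_m d \<eta>) \<le> 2 * pi" by auto
qed

lemma schf_n_bounds:
  assumes d: "0 < d" "d \<le> 2"
  shows "1 \<le> schf_n d \<eta>" "d * of_int (schf_n d \<eta>) \<le> 4 * pi + 2"
proof -
  have n2: "d * of_int (schf_n2 d \<eta>) \<le> 4 * pi"
  proof (cases "d \<le> 2 * sin \<eta>")
    case True
    define u where "u = d / (2 * sin \<eta>)"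
    have s: "sin \<eta> > 0" using True d by auto
    have u: "0 < u" "u \<le> 1" using True s d unfolding u_def by (auto simp: field_simps)
    have a: "0 < arcsin u" "u \<le> arcsin u" using arcsin_ge_self[of u] u by auto
    have "of_int (schf_n2 d \<eta>) \<le> 2 * pi / arcsin u"
      using True unfolding schf_n2_def u_def by simp
    also have "\<dots> \<le> 2 * pi / u" using a u by (intro divide_left_mono) auto
    finally have "d * of_int (schf_n2 d \<eta>) \<le> d * (2 * pi / u)" using d by (intro mult_left_mono) auto
    also have "\<dots> \<le> 4 * pi"
      using s d sin_le_one[of \<eta>] unfolding u_def by (simp add: field_simps)
    finally show ?thesis .
  qed (use d pi_gt3 in \<open>simp add: schf_n2_def\<close>)
  define Y where "Y = min (schf_n1 d \<eta>) (schf_n2 d \<eta>)"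
  have "\<lfloor>of_int Y / 2 :: real\<rfloor> = Y div 2" by (metis floor_divide_of_int_eq of_int_numeral)
  then have "2 * \<lfloor>of_int Y / 2 :: real\<rfloor> \<le> Y" by presburger
  then have "schf_n d \<eta> \<le> max (schf_n2 d \<eta>) 1" unfolding schf_n_def Y_def by linarith
  then have "d * of_int (schf_n d \<eta>) \<le> d * of_int (max (schf_n2 d \<eta>) 1)"
    using d by (intro mult_left_mono) simp_all
  also have "\<dots> = max (d * of_int (schf_n2 d \<eta>)) d"
    using d by (auto simp: max_def)
  also have "\<dots> \<le> 4 * pi + 2" using n2 d pi_gt3 by simp
  finally show "d * of_int (schf_n d \<eta>) \<le> 4 * pi + 2" .
  show "1 \<le> schf_n d \<eta>" unfolding schf_n_def by simp
qed

text \<open>Reflecting \<open>\<eta>\<close> about \<open>\<pi>/4\<close> turns \<open>M(4,d)\<close>, a sum over the layers \<open>i \<ge> 0\<close> counting \<open>i \<ge> 1\<close>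
  twice, into a sum over all layers \<open>|i| \<le> T\<close>.\<close>

definition schf_fold :: "real \<Rightarrow> real" where
  "schf_fold \<eta> = max \<eta> (pi/2 - \<eta>)"

lemma schf_fold_eta: "0 < d \<Longrightarrow> d \<le> 2 \<Longrightarrow> schf_fold (schf_eta d i) = schf_eta d \<bar>i\<bar>"
  using schf_deta_pos[of d] zero_less_mult_iff[of "of_int i" "schf_deta d"]
  by (auto simp: schf_fold_def schf_eta_def max_def abs_if)

definition schf_psi4 :: "real \<Rightarrow> real \<Rightarrow> real" where
  "schf_psi4 d \<eta> = d\<^sup>2 * of_int (schf_m d (schf_fold \<eta>) * schf_n d (schf_fold \<eta>))"

lemma schf_M4_eq_layer_sum:
  assumes d: "0 < d" "d \<le> 2"
  shows "schf_M4 d * d ^ 3 = (\<Sum>i\<in>schf_layers d. d * schf_psi4 d (schf_eta d i))"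
proof -
  define g where "g i = (of_int (schf_m d (schf_eta d i) * schf_n d (schf_eta d i)) :: real)" for i
  have "schf_M4 d * d ^ 3 = (g 0 + 2 * (\<Sum>i\<in>{1..schf_t d div 2}. g i)) * d ^ 3"
    using d unfolding schf_M4_def g_def by simp
  also have "\<dots> = (\<Sum>i\<in>schf_layers d. g \<bar>i\<bar>) * d ^ 3"
    using sum_int_interval_abs[OF schf_t_div_2_nonneg[OF d]] by simp
  also have "\<dots> = (\<Sum>i\<in>schf_layers d. d * schf_psi4 d (schf_eta d i))"
    unfolding schf_psi4_def schf_fold_eta[OF d] g_def sum_distrib_right
    by (intro sum.cong) (simp_all add: power3_eq_cube power2_eq_square)
  finally show ?thesis .
qed

lemma schf_psi4_abs_le:
  assumes "0 < d" "d \<le> 2"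
  shows "\<bar>schf_psi4 d \<eta>\<bar> \<le> 2 * pi * (4 * pi + 2)"
proof -
  note m = schf_m_bounds[OF assms, of "schf_fold \<eta>"] and n = schf_n_bounds[OF assms, of "schf_fold \<eta>"]
  have "0 \<le> d * of_int (schf_m d (schf_fold \<eta>))" "0 \<le> d * of_int (schf_n d (schf_fold \<eta>))"
    using m(1) n(1) assms by auto
  moreover have "schf_psi4 d \<eta> = (d * of_int (schf_m d (schf_fold \<eta>))) * (d * of_int (schf_n d (schf_fold \<eta>)))"
    unfolding schf_psi4_def by (simp add: power2_eq_square mult_ac)
  ultimately have "\<bar>schf_psi4 d \<eta>\<bar> = (d * of_int (schf_m d (schf_fold \<eta>))) * (d * of_int (schf_n d (schf_fold \<eta>)))"
    by simp
  also have "\<dots> \<le> 2 * pi * (4 * pi + 2)"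
    by (rule mult_mono[OF m(2) n(2)]) (use \<open>0 \<le> d * of_int (schf_n d (schf_fold \<eta>))\<close> in auto)
  finally show ?thesis .
qed

lemma tendsto_schf_psi4:
  assumes x: "0 < x" "x < pi/2"
  shows "((\<lambda>(d, \<eta>). schf_psi4 d \<eta>) \<longlongrightarrow> 8 * pi\<^sup>2 / sqrt 3 * (sin x * cos x)) (at_right 0 \<times>\<^sub>F nhds x)"
proof -
  have fold: "0 < schf_fold x" "schf_fold x < pi/2"
    using x unfolding schf_fold_def max_def by auto
  have "((\<lambda>p. schf_fold (snd p)) \<longlongrightarrow> schf_fold x) (at_right 0 \<times>\<^sub>F nhds x)"
    unfolding schf_fold_def by (intro tendsto_intros filterlim_snd)
  from tendsto_schf_mn[OF filterlim_fst this fold]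
  have "((\<lambda>(d, \<eta>). schf_psi4 d \<eta>) \<longlongrightarrow> 8 * pi\<^sup>2 / sqrt 3 * (sin (schf_fold x) * cos (schf_fold x)))
      (at_right 0 \<times>\<^sub>F nhds x)"
    by (simp add: schf_psi4_def split_beta')
  moreover have "sin (pi/2 - x) = cos x" "cos (pi/2 - x) = sin x"
    by (simp_all add: sin_diff cos_diff)
  then have "sin (schf_fold x) * cos (schf_fold x) = sin x * cos x"
    by (simp add: schf_fold_def max_def mult.commute)
  ultimately show ?thesis by simp
qed

lemma schf_M4_scaled_tendsto: "((\<lambda>d. schf_M4 d * d ^ 3) \<longlongrightarrow> 4 * pi\<^sup>2 / sqrt 3) (at_right 0)"
proof -
  define G where "G = (\<lambda>x. 8 * pi\<^sup>2 / sqrt 3 * (sin x * cos x) ^ (2 * 1 - 1))"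
  have "((\<lambda>d. \<Sum>i\<in>schf_layers d. d * schf_psi4 d (schf_eta d i)) \<longlongrightarrow> integral {0..pi/2} G) (at_right 0)"
    using tendsto_schf_psi4 schf_psi4_abs_le
    by (intro schf_layer_sum_tendsto_integral) (auto simp: G_def intro!: continuous_intros)
  moreover have "(G has_integral 8 * pi\<^sup>2 / sqrt 3 * (Beta (real 1) (real 1) / 2)) {0..pi/2}"
    unfolding G_def by (intro has_integral_mult_right has_integral_sin_cos_power_Beta) simp
  moreover have "Beta (real 1) (real 1) = 1"
    using Gamma_plus1[of "1::real"] by (simp add: Beta_def)
  ultimately have "((\<lambda>d. \<Sum>i\<in>schf_layers d. d * schf_psi4 d (schf_eta d i)) \<longlongrightarrow> 4 * pi\<^sup>2 / sqrt 3)
      (at_right 0)"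
    by (simp add: integral_unique)
  moreover have "eventually (\<lambda>d. (\<Sum>i\<in>schf_layers d. d * schf_psi4 d (schf_eta d i)) = schf_M4 d * d ^ 3)
      (at_right 0)"
    using eventually_schf_deta_less[OF zero_less_one] by eventually_elim (simp add: schf_M4_eq_layer_sum)
  ultimately show ?thesis by (rule Lim_transform_eventually)
qed

lemma schf_M4_scaled_bounded: "\<exists>B. \<forall>d>0. \<bar>schf_M4 d\<bar> * (min d 2) ^ 3 \<le> B"
proof (intro exI allI impI)
  fix d :: real assume "d > 0"
  show "\<bar>schf_M4 d\<bar> * (min d 2) ^ 3 \<le> max 8 ((pi/2 + 2) * (2 * pi * (4 * pi + 2)))"
  proof (cases "d \<le> 2")
    case True
    have "\<bar>schf_M4 d\<bar> * (min d 2) ^ 3 = \<bar>\<Sum>i\<in>schf_layers d. d * schf_psi4 d (schf_eta d i)\<bar>"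
      using True \<open>d > 0\<close> by (simp add: abs_mult flip: schf_M4_eq_layer_sum)
    also have "\<dots> \<le> (pi/2 + 2) * (2 * pi * (4 * pi + 2))"
      using True \<open>d > 0\<close> schf_psi4_abs_le by (intro schf_layer_sum_abs_le) auto
    finally show ?thesis by (rule order.trans[OF _ max.cobounded2])
  next
    case False
    then have "schf_M4 d = 1" "min d 2 = 2" by (simp_all add: schf_M4_def)
    then show ?thesis by simp
  qed
qed

section \<open>The recursive codes\<close>

text \<open>\<open>M(2^(j+2), d/c)\<close>, with the recursion's convention \<open>d/0 = +\<infinity>\<close> (a one-point code).\<close>

definition schf_lift :: "nat \<Rightarrow> real \<Rightarrow> real \<Rightarrow> real" where
  "schf_lift j d c = (if c = 0 then 1 else schf_Mrec j (d / c))"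

definition schf_psi :: "nat \<Rightarrow> real \<Rightarrow> real \<Rightarrow> real" where
  "schf_psi j d \<eta> = d ^ (2 * (2 ^ (j + 2) - 1)) * schf_lift j d (cos \<eta>) * schf_lift j d (sin \<eta>)"

lemma schf_Mrec_Suc_eq_layer_sum:
  assumes "0 < d" "d \<le> 2"
  shows "schf_Mrec (Suc j) d * d ^ (2 ^ (Suc j + 2) - 1) = (\<Sum>i\<in>schf_layers d. d * schf_psi j d (schf_eta d i))"
proof -
  have "d ^ (2 ^ (Suc j + 2) - 1) = d * d ^ (2 * (2 ^ (j + 2) - 1))"
    unfolding add_Suc two_power_Suc_minus_1 by simp
  then show ?thesis
    using assms by (simp add: schf_psi_def schf_lift_def sum_distrib_left sum_distrib_right mult_ac)
qed

lemma schf_lift_scaled_abs_le: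
  assumes B: "\<And>d. d > 0 \<Longrightarrow> \<bar>schf_Mrec j d\<bar> * (min d 2) ^ p \<le> B"
    and d: "0 < d" "d \<le> 2" and c: "0 \<le> c" "c \<le> 1"
  shows "\<bar>d ^ p * schf_lift j d c\<bar> \<le> max B (2 ^ p)"
proof (cases "c = 0")
  case True
  have "d ^ p \<le> 2 ^ p" using d by (intro power_mono) auto
  then show ?thesis using True d by (simp add: schf_lift_def)
next
  case False
  then have "d \<le> d / c" using c d by (simp add: field_simps mult_left_le_one_le)
  then have "d ^ p \<le> (min (d / c) 2) ^ p" using d by (intro power_mono) auto
  then have "\<bar>d ^ p * schf_Mrec j (d / c)\<bar> \<le> (min (d / c) 2) ^ p * \<bar>schf_Mrec j (d / c)\<bar>"
    using d by (simp add: abs_mult mult_right_mono)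
  also have "\<dots> \<le> B" using B[of "d / c"] False c d by (simp add: mult.commute)
  also have "\<dots> \<le> max B (2 ^ p)" by simp
  finally show ?thesis using False by (simp add: schf_lift_def)
qed

lemma schf_psi_abs_le:
  assumes B: "\<And>d. d > 0 \<Longrightarrow> \<bar>schf_Mrec j d\<bar> * (min d 2) ^ (2 ^ (j + 2) - 1) \<le> B"
    and d: "0 < d" "d \<le> 2" and \<eta>: "0 \<le> \<eta>" "\<eta> \<le> pi/2"
  shows "\<bar>schf_psi j d \<eta>\<bar> \<le> (max B (2 ^ (2 ^ (j + 2) - 1)))\<^sup>2"
proof -
  define p :: nat where "p = 2 ^ (j + 2) - 1"
  have "schf_psi j d \<eta> = (d ^ p * schf_lift j d (cos \<eta>)) * (d ^ p * schf_lift j d (sin \<eta>))"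
    unfolding schf_psi_def p_def by (simp add: mult_2 power_add mult_ac)
  then have "\<bar>schf_psi j d \<eta>\<bar> = \<bar>d ^ p * schf_lift j d (cos \<eta>)\<bar> * \<bar>d ^ p * schf_lift j d (sin \<eta>)\<bar>"
    by (simp only: abs_mult)
  also have "\<dots> \<le> max B (2 ^ p) * max B (2 ^ p)"
    using \<eta> cos_ge_zero[of \<eta>] sin_ge_zero[of \<eta>]
    by (intro mult_mono schf_lift_scaled_abs_le[OF B[folded p_def] d]) (auto simp: le_max_iff_disj)
  finally show ?thesis by (simp add: power2_eq_square p_def)
qed

lemma schf_Mrec_scaled_bounded: "\<exists>B. \<forall>d>0. \<bar>schf_Mrec j d\<bar> * (min d 2) ^ (2 ^ (j + 2) - 1) \<le> B"
proof (induction j)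
  case 0
  then show ?case using schf_M4_scaled_bounded by simp
next
  case (Suc j)
  then obtain B where B: "\<And>d. d > 0 \<Longrightarrow> \<bar>schf_Mrec j d\<bar> * (min d 2) ^ (2 ^ (j + 2) - 1) \<le> B"
    by blast
  define K where "K = (max B (2 ^ (2 ^ (j + 2) - 1)))\<^sup>2"
  have "\<bar>schf_Mrec (Suc j) d\<bar> * (min d 2) ^ (2 ^ (Suc j + 2) - 1) \<le> max (2 ^ (2 ^ (Suc j + 2) - 1)) ((pi/2 + 2) * K)"
    if "d > 0" for d
  proof (cases "d \<le> 2")
    case True
    have "\<bar>schf_Mrec (Suc j) d\<bar> * (min d 2) ^ (2 ^ (Suc j + 2) - 1)
        = \<bar>\<Sum>i\<in>schf_layers d. d * schf_psi j d (schf_eta d i)\<bar>"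
      using True \<open>d > 0\<close> by (simp add: abs_mult flip: schf_Mrec_Suc_eq_layer_sum)
    also have "\<dots> \<le> (pi/2 + 2) * K"
      unfolding K_def using True \<open>d > 0\<close> by (intro schf_layer_sum_abs_le schf_psi_abs_le[OF B]) auto
    finally show ?thesis by linarith
  qed simp
  then show ?case by blast
qed

lemma tendsto_schf_psi:
  assumes lim: "((\<lambda>d. schf_Mrec j d * d ^ (2 ^ (j + 2) - 1)) \<longlongrightarrow> L) (at_right 0)"
    and x: "0 < x" "x < pi/2"
  shows "((\<lambda>(d, \<eta>). schf_psi j d \<eta>) \<longlongrightarrow> L\<^sup>2 * (sin x * cos x) ^ (2 ^ (j + 2) - 1))
           (at_right 0 \<times>\<^sub>F nhds x)"
proof -
  define p :: nat where "p = 2 ^ (j + 2) - 1"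
  let ?F = "at_right (0::real) \<times>\<^sub>F nhds x"
  have c: "((\<lambda>q. cos (snd q)) \<longlongrightarrow> cos x) ?F" "cos x > 0"
    using x by (auto intro!: tendsto_intros filterlim_snd cos_gt_zero_pi)
  have s: "((\<lambda>q. sin (snd q)) \<longlongrightarrow> sin x) ?F" "sin x > 0"
    using x by (auto intro!: tendsto_intros filterlim_snd sin_gt_zero)
  have scaled: "((\<lambda>q. schf_Mrec j (fst q / f q) * (fst q / f q) ^ p) \<longlongrightarrow> L) ?F"
    if "(f \<longlongrightarrow> f0) ?F" "f0 > 0" for f f0
    by (rule filterlim_compose[OF lim[folded p_def] filterlim_fst_div_at_right[OF that]])
  have "((\<lambda>q. (schf_Mrec j (fst q / cos (snd q)) * (fst q / cos (snd q)) ^ p)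
             * (schf_Mrec j (fst q / sin (snd q)) * (fst q / sin (snd q)) ^ p)
             * (sin (snd q) * cos (snd q)) ^ p) \<longlongrightarrow> L * L * (sin x * cos x) ^ p) ?F"
    by (intro tendsto_mult tendsto_power scaled[OF c] scaled[OF s] c(1) s(1))
  moreover have "eventually (\<lambda>q. cos (snd q) > 0 \<and> sin (snd q) > 0) ?F"
    using order_tendstoD(1)[OF c(1,2)] order_tendstoD(1)[OF s(1,2)] by eventually_elim auto
  then have "eventually (\<lambda>q. (schf_Mrec j (fst q / cos (snd q)) * (fst q / cos (snd q)) ^ p)
             * (schf_Mrec j (fst q / sin (snd q)) * (fst q / sin (snd q)) ^ p)
             * (sin (snd q) * cos (snd q)) ^ p = schf_psi j (fst q) (snd q)) ?F"
  proof eventually_elim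
    case (elim q)
    have "(fst q / cos (snd q)) ^ p * (fst q / sin (snd q)) ^ p * (sin (snd q) * cos (snd q)) ^ p
        = fst q ^ (2 * p)"
      using elim by (simp add: power_mult_distrib [symmetric] mult_2 power_add)
    then show ?case using elim by (simp add: schf_psi_def schf_lift_def p_def mult_ac)
  qed
  ultimately show ?thesis
    unfolding p_def by (simp add: split_beta' power2_eq_square Lim_transform_eventually)
qed

section \<open>Sphere areas and the limit density\<close>

lemma sphere_area_pos: "m \<ge> 1 \<Longrightarrow> 0 < sphere_area m"
  by (simp add: sphere_area_def)

lemma sphere_area_even:
  assumes "n \<ge> 1"
  shows "sphere_area (2 * n) = 2 * pi ^ n / Gamma (real n)"
proof -
  have "Gamma (real n + 1) = real n * Gamma (real n)"
    using assms by (intro Gamma_plus1) (auto simp: of_nat_in_nonpos_Ints_iff)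
  then show ?thesis
    using assms by (simp add: sphere_area_def powr_realpow add.commute)
qed

lemma sphere_area_even_sq_mult_Beta:
  assumes "n \<ge> 1"
  shows "(sphere_area (2 * n))\<^sup>2 * Beta (real n) (real n) = 2 * sphere_area (4 * n)"
proof -
  have "Gamma (real n) > 0" using assms by (intro Gamma_real_pos) simp
  then have "(sphere_area (2 * n))\<^sup>2 * Beta (real n) (real n) = (2 * pi ^ n)\<^sup>2 / Gamma (real (2 * n))"
    unfolding sphere_area_even[OF assms] Beta_def by (simp add: power2_eq_square)
  also have "\<dots> = 2 * sphere_area (4 * n)"
  proof -
    have "sphere_area (4 * n) = 2 * pi ^ (2 * n) / Gamma (real (2 * n))"
      using sphere_area_even[of "2 * n"] assms by simp
    moreover have "pi ^ (2 * n) = pi ^ n * pi ^ n" by (metis mult_2 power_add)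
    ultimately show ?thesis by (simp add: power2_eq_square)
  qed
  finally show ?thesis .
qed

text \<open>Indexed by \<open>j = k - 2\<close>, like \<^const>\<open>schf_Mrec\<close>.\<close>

definition schf_density :: "nat \<Rightarrow> real" where
  "schf_density j = 2 powr (1 - 3 * 2 ^ j) * 3 powr (- (2 ^ j / 2))"

lemma schf_density_0: "schf_density 0 = 1 / (4 * sqrt 3)"
proof -
  have two: "(2::real) powr (- 2) = 1 / 4" by (simp add: powr_minus_divide powr_numeral)
  have three: "(3::real) powr (- (1 / 2)) = 1 / sqrt 3" by (simp add: powr_minus_divide powr_half_sqrt)
  have "schf_density 0 = 2 powr (- 2) * 3 powr (- (1 / 2))" by (simp add: schf_density_def)
  then show ?thesis unfolding two three by simp
qed

lemma schf_density_Suc: "schf_density (Suc j) = (schf_density j)\<^sup>2 / 2"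
proof -
  have "(2::real) powr (2 * (1 - 3 * 2 ^ j)) = 2 * 2 powr (1 - 3 * 2 ^ Suc j)"
    using powr_add[of "2::real" 1 "1 - 3 * 2 ^ Suc j"] by simp
  moreover have "(schf_density j)\<^sup>2 = 2 powr (2 * (1 - 3 * 2 ^ j)) * 3 powr (- (2 ^ j))"
    by (simp add: schf_density_def power2_eq_square powr_add [symmetric] mult_ac)
  ultimately show ?thesis by (simp add: schf_density_def)
qed

lemma schf_density_eq_powr:
  assumes "k \<ge> 2"
  shows "schf_density (k - 2) = 2 powr (1 - 3 * 2 powr (real k - 2)) * 3 powr (- (2 powr (real k - 3)))"
proof -
  have two: "(2::real) powr (real k - 2) = 2 ^ (k - 2)"
    and three: "(2::real) powr (real k - 3) = 2 ^ (k - 2) / 2"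
    using assms by (simp_all add: powr_diff powr_realpow power_diff)
  show ?thesis unfolding schf_density_def two three ..
qed

definition schf_limit :: "nat \<Rightarrow> real" where
  "schf_limit j = sphere_area (2 ^ (j + 2)) * 2 ^ (2 ^ (j + 2) - 1) * schf_density j"

lemma schf_limit_Suc:
  "schf_limit (Suc j) = (schf_limit j)\<^sup>2 * (Beta (real (2 ^ (j + 1))) (real (2 ^ (j + 1))) / 2)"
proof -
  define n :: nat where "n = 2 ^ (j + 1)"
  have n: "n \<ge> 1" "2 ^ (j + 2) = 2 * n" "2 ^ (Suc j + 2) = 4 * n" by (simp_all add: n_def)
  have "4 * n - 1 = Suc ((2 * n - 1) + (2 * n - 1))" using n(1) by simp
  then have pow: "(2::real) ^ (4 * n - 1) = 2 * (2 ^ (2 * n - 1))\<^sup>2"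
    by (simp only: power_Suc power_add power2_eq_square)
  have "(schf_limit j)\<^sup>2 * (Beta (real n) (real n) / 2)
      = ((sphere_area (2 * n))\<^sup>2 * Beta (real n) (real n)) * (2 ^ (2 * n - 1))\<^sup>2 * (schf_density j)\<^sup>2 / 2"
    unfolding schf_limit_def n(2) by (simp add: power_mult_distrib)
  also have "\<dots> = sphere_area (4 * n) * (2 * (2 ^ (2 * n - 1))\<^sup>2) * ((schf_density j)\<^sup>2 / 2)"
    unfolding sphere_area_even_sq_mult_Beta[OF n(1)] by simp
  also have "\<dots> = schf_limit (Suc j)"
    unfolding schf_limit_def n(3) pow schf_density_Suc ..
  finally show ?thesis unfolding n_def ..
qed

lemma schf_Mrec_scaled_tendsto:
  "((\<lambda>d. schf_Mrec j d * d ^ (2 ^ (j + 2) - 1)) \<longlongrightarrow> schf_limit j) (at_right 0)"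
proof (induction j)
  case 0
  have "sphere_area 4 = 2 * pi\<^sup>2"
    using sphere_area_even[of 2] Gamma_plus1[of "1::real"] by (simp add: power2_eq_square)
  then have "schf_limit 0 = 4 * pi\<^sup>2 / sqrt 3"
    by (simp add: schf_limit_def schf_density_0)
  then show ?case using schf_M4_scaled_tendsto by simp
next
  case (Suc j)
  define n :: nat where "n = 2 ^ (j + 1)"
  have n: "n \<ge> 1" "2 ^ (j + 2) - 1 = 2 * n - 1" by (simp_all add: n_def)
  obtain B where B: "\<And>d. d > 0 \<Longrightarrow> \<bar>schf_Mrec j d\<bar> * (min d 2) ^ (2 ^ (j + 2) - 1) \<le> B"
    using schf_Mrec_scaled_bounded by blast
  have sums: "((\<lambda>d. \<Sum>i\<in>schf_layers d. d * schf_psi j d (schf_eta d i)) \<longlongrightarrow>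
      integral {0..pi/2} (\<lambda>x. (schf_limit j)\<^sup>2 * (sin x * cos x) ^ (2 ^ (j + 2) - 1))) (at_right 0)"
    using tendsto_schf_psi[OF Suc.IH] schf_psi_abs_le[OF B]
    by (intro schf_layer_sum_tendsto_integral) (auto intro!: continuous_intros)
  have integral: "integral {0..pi/2} (\<lambda>x. (schf_limit j)\<^sup>2 * (sin x * cos x) ^ (2 ^ (j + 2) - 1))
      = schf_limit (Suc j)"
    unfolding schf_limit_Suc n(2) n_def [symmetric]
    by (intro integral_unique has_integral_mult_right has_integral_sin_cos_power_Beta n(1))
  have "eventually (\<lambda>d. (\<Sum>i\<in>schf_layers d. d * schf_psi j d (schf_eta d i))
      = schf_Mrec (Suc j) d * d ^ (2 ^ (Suc j + 2) - 1)) (at_right 0)"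
    using eventually_schf_deta_less[OF zero_less_one]
    by eventually_elim (simp only: schf_Mrec_Suc_eq_layer_sum)
  with sums[unfolded integral] show ?case by (rule Lim_transform_eventually)
qed

theorem corollary2:
  fixes k :: nat
  assumes "k \<ge> 2"
  shows "((\<lambda>d::real. schf_M k d / sphere_area (2 ^ k) * (d / 2) ^ (2 ^ k - 1))
           \<longlongrightarrow> 2 powr (1 - 3 * 2 powr (real k - 2)) * 3 powr (- (2 powr (real k - 3))))
         (at_right 0)"
proof -
  define j where "j = k - 2"
  define S where "S = sphere_area (2 ^ k) * 2 ^ (2 ^ k - 1)"
  have k: "k = j + 2" using assms by (simp add: j_def)
  have S: "S > 0" unfolding S_def by (intro mult_pos_pos sphere_area_pos) simp_all
  have "((\<lambda>d. schf_Mrec j d * d ^ (2 ^ k - 1) / S) \<longlongrightarrow> schf_limit j / S) (at_right 0)"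
    using schf_Mrec_scaled_tendsto[of j] S unfolding k by (intro tendsto_divide tendsto_const) auto
  moreover have "schf_limit j = S * schf_density j"
    by (simp add: S_def schf_limit_def k)
  then have "schf_limit j / S = schf_density j" using S by simp
  moreover have "schf_Mrec j d * d ^ (2 ^ k - 1) / S = schf_M k d / sphere_area (2 ^ k) * (d / 2) ^ (2 ^ k - 1)"
    for d :: real
    by (simp add: S_def schf_M_def j_def power_divide)
  ultimately show ?thesis
    using schf_density_eq_powr[OF assms] by (simp add: j_def)
qed

end
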